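(* Let $p$ be an odd prime, $i$ an integer with $1\leq i\leq p-1$, and $k\geq1$ an integer. Then for every integer $l\geq k$, $v_p\left(\frac{k!}{l!}{l \brace k}_{\leq i}\right)\geq 0$.
   Context: For integers $N\geq k\geq0$ and $r\ge1$, the $r$-restricted Stirling number of the second kind ${N \brace k}_{\leq r}$ is $\sum \frac{N!}{\prod_{m=1}^r j_m!(m!)^{j_m}}$ over $(j_1,\dots,j_r)\in\mathbb{N}^r$ with $\sum j_m=k$, $\sum m j_m=N$; equivalently the number of partitions of an $N$-element set into $k$ nonempty blocks of size at most $r$. $v_p$ is the $p$-adic valuation on $\mathbb{Q}$ (with $v_p(0)=+\infty$). *)

theory Defs
  imports "HOL-Computational_Algebra.Computational_Algebra" "HOL-Library.Extended_Real"
begin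

definition padic_val_rat :: "nat \<Rightarrow> rat \<Rightarrow> ereal" where
  "padic_val_rat p q =
     (if q = 0 then \<infinity>
      else ereal (of_int (int (multiplicity (int p) (fst (quotient_of q)))
                     - int (multiplicity (int p) (snd (quotient_of q))))))"

text \<open>Admissible tuples (j_1,...,j_r), encoded as functions nat => nat vanishing outside {1..r}.\<close>
definition rstir_tuples :: "nat \<Rightarrow> nat \<Rightarrow> nat \<Rightarrow> (nat \<Rightarrow> nat) set" where
  "rstir_tuples r N k = {j. (\<forall>m. m \<notin> {1..r} \<longrightarrow> j m = 0)
                          \<and> (\<Sum>m=1..r. j m) = k \<and> (\<Sum>m=1..r. m * j m) = N}"

definition restricted_stirling :: "nat \<Rightarrow> nat \<Rightarrow> nat \<Rightarrow> rat" where
  "restricted_stirling N k r =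
     (\<Sum>j\<in>rstir_tuples r N k. fact N / (\<Prod>m=1..r. fact (j m) * (fact m) ^ (j m)))"

end

theory Submission
  imports Defs
begin

text \<open>Multiplying the sum defining the restricted Stirling number by \<open>k!/l!\<close> turns every
  summand into the multinomial coefficient \<open>k!/\<Prod> j\<^sub>m!\<close>, an integer, divided by
  \<open>\<Prod> (m!)^j\<^sub>m\<close>, which is prime to \<open>p\<close> because all block sizes \<open>m \<le> i\<close> are below \<open>p\<close>.
  So every summand, and hence the sum, lies in the localization \<open>\<int>\<^sub>(\<^sub>p\<^sub>)\<close>, where \<open>v\<^sub>p \<ge> 0\<close>.\<close>

definition p_integral :: "nat \<Rightarrow> rat \<Rightarrow> bool" where
  "p_integral p q \<longleftrightarrow> (\<exists>a b. q = of_int a / of_int b \<and> \<not> int p dvd b)"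

lemma p_integral_of_int_div:
  "\<not> int p dvd b \<Longrightarrow> p_integral p (of_int a / of_int b)"
  unfolding p_integral_def by blast

lemma p_integral_0: "p \<noteq> 1 \<Longrightarrow> p_integral p 0"
  using p_integral_of_int_div[of p 1 0] by simp

lemma p_integral_add:
  assumes "prime p" "p_integral p x" "p_integral p y"
  shows "p_integral p (x + y)"
proof -
  obtain a b where x: "x = of_int a / of_int b" and b: "\<not> int p dvd b"
    using assms(2) unfolding p_integral_def by blast
  obtain c d where y: "y = of_int c / of_int d" and d: "\<not> int p dvd d"
    using assms(3) unfolding p_integral_def by blast
  have "b \<noteq> 0" "d \<noteq> 0" using b d by auto
  then have "x + y = of_int (a * d + c * b) / of_int (b * d)"
    by (simp add: x y field_simps)
  moreover have "\<not> int p dvd b * d"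
    using assms(1) b d by (simp add: prime_dvd_mult_iff)
  ultimately show ?thesis by (metis p_integral_of_int_div)
qed

lemma p_integral_sum:
  assumes "prime p" "\<And>x. x \<in> A \<Longrightarrow> p_integral p (f x)"
  shows "p_integral p (sum f A)"
  using assms(2)
proof (induction A rule: infinite_finite_induct)
  case (infinite A)
  then show ?case using assms(1) p_integral_0 by (simp add: prime_nat_iff)
next
  case empty
  then show ?case using assms(1) p_integral_0 by (simp add: prime_nat_iff)
next
  case (insert x F)
  then show ?case using p_integral_add[OF assms(1)] by simp
qed

text \<open>The reduced denominator divides every denominator of \<open>q\<close>.\<close>
lemma padic_val_rat_nonneg_if_p_integral:
  assumes "p_integral p q"
  shows "padic_val_rat p q \<ge> 0"
proof (cases "q = 0")
  case True
  then show ?thesis by (simp add: padic_val_rat_def)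
next
  case False
  obtain a b where q: "q = of_int a / of_int b" and b: "\<not> int p dvd b"
    using assms unfolding p_integral_def by blast
  obtain n d where nd: "quotient_of q = (n, d)" by (cases "quotient_of q")
  have "b \<noteq> 0" "d > 0" using b quotient_of_denom_pos[OF nd] by auto
  with q quotient_of_div[OF nd] have "n * b = a * d"
    by (simp add: field_simps flip: of_int_mult)
  then have "d dvd n * b" by simp
  with quotient_of_coprime[OF nd] have "d dvd b"
    by (simp add: coprime_commute coprime_dvd_mult_right_iff)
  with b have "multiplicity (int p) d = 0"
    by (meson dvd_trans not_dvd_imp_multiplicity_0)
  with False nd show ?thesis by (simp add: padic_val_rat_def)
qed

lemma prod_fact_dvd_fact_sum:
  "finite S \<Longrightarrow> (\<Prod>m\<in>S. fact (j m) :: nat) dvd fact (\<Sum>m\<in>S. j m)"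
proof (induction S rule: finite_induct)
  case empty
  then show ?case by simp
next
  case (insert x F)
  have "fact (j x) * (\<Prod>m\<in>F. fact (j m)) dvd fact (j x) * (fact (\<Sum>m\<in>F. j m) :: nat)"
    using insert by (simp add: mult_dvd_mono)
  also have "\<dots> dvd fact (j x + (\<Sum>m\<in>F. j m))" by (rule fact_fact_dvd_fact)
  finally show ?case using insert by simp
qed

lemma prime_not_dvd_prod_fact_power:
  assumes "prime p" "finite S" "\<And>m. m \<in> S \<Longrightarrow> m < p"
  shows "\<not> p dvd (\<Prod>m\<in>S. fact m ^ j m :: nat)"
proof
  assume "p dvd (\<Prod>m\<in>S. fact m ^ j m :: nat)"
  then obtain m where "m \<in> S" "p dvd (fact m ^ j m :: nat)"
    using prime_dvd_prod_iff[OF assms(2,1), of "\<lambda>m. fact m ^ j m"] by blast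
  then have "p dvd (fact m :: nat)"
    using assms(1) prime_dvd_power by blast
  then have "p \<le> m"
    using prime_dvd_fact_iff[OF assms(1)] by simp
  with assms(3)[OF \<open>m \<in> S\<close>] show False by simp
qed

lemma p_integral_multinomial_div_prod_fact_power:
  assumes "prime p" "finite S" "\<And>m. m \<in> S \<Longrightarrow> m < p"
  shows "p_integral p (fact (\<Sum>m\<in>S. j m) / (\<Prod>m\<in>S. fact (j m) * fact m ^ j m))"
proof -
  obtain c where c: "fact (\<Sum>m\<in>S. j m) = (\<Prod>m\<in>S. fact (j m) :: nat) * c"
    using prod_fact_dvd_fact_sum[OF assms(2)] by (rule dvdE)
  define B :: nat where "B = (\<Prod>m\<in>S. fact m ^ j m)"
  have "(fact (\<Sum>m\<in>S. j m) :: rat) = of_nat (\<Prod>m\<in>S. fact (j m)) * of_nat c"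
    by (metis c of_nat_fact of_nat_mult)
  then have "(fact (\<Sum>m\<in>S. j m) :: rat) / (\<Prod>m\<in>S. fact (j m) * fact m ^ j m)
      = of_int (int c) / of_int (int B)"
    by (simp add: B_def prod.distrib assms(2))
  moreover have "\<not> int p dvd int B"
    using prime_not_dvd_prod_fact_power[OF assms] unfolding B_def int_dvd_int_iff .
  ultimately show ?thesis by (metis p_integral_of_int_div)
qed

lemma fact_div_fact_restricted_stirling:
  "fact k / fact N * restricted_stirling N k r
     = (\<Sum>j\<in>rstir_tuples r N k. fact (\<Sum>m=1..r. j m) / (\<Prod>m=1..r. fact (j m) * fact m ^ j m))"
  unfolding restricted_stirling_def sum_distrib_left
  by (rule sum.cong) (auto simp: rstir_tuples_def)

theorem lemma3p13:
  fixes p i k l :: nat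
  assumes "prime p" and "odd p" and "1 \<le> i" and "i \<le> p - 1" and "1 \<le> k" and "k \<le> l"
  shows "padic_val_rat p (fact k / fact l * restricted_stirling l k i) \<ge> 0"
proof -
  have "\<And>m. m \<in> {1..i} \<Longrightarrow> m < p"
    using assms(4) prime_gt_1_nat[OF assms(1)] by auto
  then have "p_integral p (fact k / fact l * restricted_stirling l k i)"
    unfolding fact_div_fact_restricted_stirling
    by (intro p_integral_sum p_integral_multinomial_div_prod_fact_power assms(1)) auto
  then show ?thesis by (rule padic_val_rat_nonneg_if_p_integral)
qed

end
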